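(* If every ample class is dismantlable, then for every $n$ the cross-polytope $O_n$ is extendably shellable.
   Context: For a finite set $X$, a concept class is $C\subseteq 2^X$; $Y\subseteq X$ is shattered by $C$ if $\{c\cap Y:c\in C\}=2^Y$. A cube of $2^X$ is $\{T\cup Z:Z\subseteq Y\}$ with $Y\subseteq X$, $T\subseteq X\setminus Y$ ($Y$ its support); $C$ is ample if every set shattered by $C$ is the support of a cube contained in $C$. $C$ is dismantlable if it admits an ordering $c_1,\dots,c_m$ of all its concepts such that every level set $\{c_1,\dots,c_i\}$ is ample. With $\pm X=\{\pm x_1,\dots,\pm x_n\}$, the cross-polytope $O_n$ is the simplicial complex whose facets are the sets $\sigma\subseteq\pm X$ containing exactly one of $+x_i,-x_i$ for each $i$. A partial shelling is a sequence $\sigma_1,\dots,\sigma_m$ of distinct facets such that for each $2\le j\le m$ the family $2^{\sigma_j}\cap\bigcup_{i<j}2^{\sigma_i}$ is a pure complex whose maximal sets all have size $n-1$; a shelling is a partial shelling containing all facets. $O_n$ is extendably shellable if every partial shelling can be extended to a shelling. *)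

theory Defs
  imports Main
begin

definition shatters :: "'a set set \<Rightarrow> 'a set \<Rightarrow> bool" where
  "shatters C Y \<longleftrightarrow> {c \<inter> Y | c. c \<in> C} = Pow Y"

definition cube :: "'a set \<Rightarrow> 'a set \<Rightarrow> 'a set set" where
  "cube T Y = {T \<union> Z | Z. Z \<subseteq> Y}"

definition ample :: "'a set \<Rightarrow> 'a set set \<Rightarrow> bool" where
  "ample X C \<longleftrightarrow> (\<forall>Y. Y \<subseteq> X \<longrightarrow> shatters C Y \<longrightarrow>
      (\<exists>T. T \<subseteq> X - Y \<and> cube T Y \<subseteq> C))"

definition dismantlable :: "'a set \<Rightarrow> 'a set set \<Rightarrow> bool" where
  "dismantlable X C \<longleftrightarrow> (\<exists>cs. distinct cs \<and> set cs = C \<and>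
      (\<forall>i. 1 \<le> i \<and> i \<le> length cs \<longrightarrow> ample X (set (take i cs))))"

(* vertices of the cross-polytope O_n: (i, True) = +x_i, (i, False) = -x_i, for i < n *)
definition cross_facets :: "nat \<Rightarrow> (nat \<times> bool) set set" where
  "cross_facets n = {\<sigma>. \<sigma> \<subseteq> {0..<n} \<times> UNIV \<and>
      (\<forall>i<n. ((i, True) \<in> \<sigma>) \<noteq> ((i, False) \<in> \<sigma>))}"

definition maximal_sets :: "'a set set \<Rightarrow> 'a set set" where
  "maximal_sets F = {s \<in> F. \<forall>t \<in> F. s \<subseteq> t \<longrightarrow> s = t}"

definition pure_of_size :: "'a set set \<Rightarrow> nat \<Rightarrow> bool" where
  "pure_of_size F k \<longleftrightarrow> (\<forall>s \<in> maximal_sets F. finite s \<and> card s = k)"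

definition partial_shelling :: "nat \<Rightarrow> (nat \<times> bool) set list \<Rightarrow> bool" where
  "partial_shelling n \<sigma>s \<longleftrightarrow> distinct \<sigma>s \<and> set \<sigma>s \<subseteq> cross_facets n \<and>
     (\<forall>j. 1 \<le> j \<and> j < length \<sigma>s \<longrightarrow>
        pure_of_size (Pow (\<sigma>s ! j) \<inter> (\<Union>i<j. Pow (\<sigma>s ! i))) (n - 1))"

definition shelling :: "nat \<Rightarrow> (nat \<times> bool) set list \<Rightarrow> bool" where
  "shelling n \<sigma>s \<longleftrightarrow> partial_shelling n \<sigma>s \<and> set \<sigma>s = cross_facets n"

definition extendably_shellable :: "nat \<Rightarrow> bool" where
  "extendably_shellable n \<longleftrightarrow>
     (\<forall>\<sigma>s. partial_shelling n \<sigma>s \<longrightarrow> (\<exists>\<tau>s. shelling n (\<sigma>s @ \<tau>s)))"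

end

theory Submission
  imports Defs
begin

text \<open>Encode a facet of \<open>O\<^sub>n\<close> by the set of coordinates where it contains \<open>+x\<^sub>i\<close>. Two facets
  then meet in a ridge iff their codes are adjacent in the cube \<open>2\<^bsup>X\<^esup>\<close>, and a sequence of facets
  is a partial shelling iff every new code \<open>v\<close> has, for each earlier code \<open>u\<close>, an earlier neighbour
  obtained by flipping a coordinate in which \<open>v\<close> and \<open>u\<close> differ. Using Lawrence's characterisation
  of ample classes and the ampleness of their fibers, such sequences are exactly the sequences all
  of whose level sets are ample. So a partial shelling spans an ample class \<open>A\<close>; its complement is
  ample, hence dismantlable by hypothesis, and a dismantling order of it read backwards extends the
  partial shelling to a shelling, because its level sets are complements of ample classes.\<close>

lemma shattersI:
  assumes "\<And>S. S \<subseteq> Y \<Longrightarrow> \<exists>c\<in>C. c \<inter> Y = S"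
  shows "shatters C Y"
  unfolding shatters_def using assms by blast

lemma shattersD:
  assumes "shatters C Y" "S \<subseteq> Y"
  shows "\<exists>c\<in>C. c \<inter> Y = S"
proof -
  have "S \<in> {c \<inter> Y | c. c \<in> C}"
    using assms unfolding shatters_def by simp
  then show ?thesis by blast
qed

lemma shatters_mono:
  assumes "shatters C Y" "C \<subseteq> C'"
  shows "shatters C' Y"
proof (rule shattersI)
  fix S assume "S \<subseteq> Y"
  then obtain c where "c \<in> C" "c \<inter> Y = S"
    using shattersD[OF assms(1)] by blast
  then show "\<exists>c\<in>C'. c \<inter> Y = S"
    using assms(2) by blast
qed

lemma ampleD: "ample X C \<Longrightarrow> Y \<subseteq> X \<Longrightarrow> shatters C Y \<Longrightarrow> \<exists>T. T \<subseteq> X - Y \<and> cube T Y \<subseteq> C"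
  unfolding ample_def by simp

lemma mem_cubeI: "Z \<subseteq> Y \<Longrightarrow> T \<union> Z \<in> cube T Y"
  unfolding cube_def by blast

definition co_shattered :: "'a set \<Rightarrow> 'a set set \<Rightarrow> 'a set \<Rightarrow> bool" where
  "co_shattered X C Y \<longleftrightarrow> Y \<subseteq> X \<and> shatters C Y \<and> shatters (Pow X - C) (X - Y)"

lemma ample_iff_not_co_shattered:
  assumes "C \<subseteq> Pow X"
  shows "ample X C \<longleftrightarrow> (\<nexists>Y. co_shattered X C Y)"
proof
  assume "ample X C"
  show "\<nexists>Y. co_shattered X C Y"
  proof
    assume "\<exists>Y. co_shattered X C Y"
    then obtain Y where Y: "Y \<subseteq> X" "shatters C Y" "shatters (Pow X - C) (X - Y)"
      unfolding co_shattered_def by blast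
    obtain T where T: "T \<subseteq> X - Y" "cube T Y \<subseteq> C"
      using ampleD[OF \<open>ample X C\<close> Y(1,2)] by blast
    obtain c where c: "c \<in> Pow X - C" "c \<inter> (X - Y) = T"
      using shattersD[OF Y(3) T(1)] by blast
    then have "c = T \<union> (c \<inter> Y)"
      by blast
    then have "c \<in> cube T Y"
      unfolding cube_def by blast
    then show False
      using c(1) T(2) by blast
  qed
next
  assume no: "\<nexists>Y. co_shattered X C Y"
  show "ample X C"
    unfolding ample_def
  proof (intro allI impI)
    fix Y assume Y: "Y \<subseteq> X" "shatters C Y"
    have "\<exists>T. T \<subseteq> X - Y \<and> (\<forall>c\<in>Pow X - C. c \<inter> (X - Y) \<noteq> T)"
    proof (rule ccontr)
      assume "\<nexists>T. T \<subseteq> X - Y \<and> (\<forall>c\<in>Pow X - C. c \<inter> (X - Y) \<noteq> T)"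
      then have "shatters (Pow X - C) (X - Y)"
        by (intro shattersI) meson
      then show False
        using no Y unfolding co_shattered_def by blast
    qed
    then obtain T where T: "T \<subseteq> X - Y" and missed: "\<forall>c\<in>Pow X - C. c \<inter> (X - Y) \<noteq> T"
      by blast
    have "cube T Y \<subseteq> C"
    proof
      fix c assume "c \<in> cube T Y"
      then obtain Z where "Z \<subseteq> Y" "c = T \<union> Z"
        unfolding cube_def by blast
      then have "c \<subseteq> X" "c \<inter> (X - Y) = T"
        using T Y(1) by blast+
      then show "c \<in> C"
        using missed by blast
    qed
    then show "\<exists>T. T \<subseteq> X - Y \<and> cube T Y \<subseteq> C"
      using T by blast
  qed
qed

lemma ample_Diff:
  assumes "C \<subseteq> Pow X" "ample X C"
  shows "ample X (Pow X - C)"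
proof -
  have "co_shattered X C (X - Y)" if "co_shattered X (Pow X - C) Y" for Y
  proof -
    have "Pow X - (Pow X - C) = C" "X - (X - Y) = Y"
      using assms(1) that unfolding co_shattered_def by blast+
    then show ?thesis
      using that unfolding co_shattered_def by auto
  qed
  then show ?thesis
    using assms ample_iff_not_co_shattered[of C X] ample_iff_not_co_shattered[of "Pow X - C" X]
    by blast
qed

lemma ample_empty: "ample X {}"
  using shattersD[of "{}" _ "{}"] unfolding ample_def by blast

definition fiber :: "'a set set \<Rightarrow> 'a set \<Rightarrow> 'a set \<Rightarrow> 'a set set" where
  "fiber C E T = (\<lambda>c. c - E) ` {c \<in> C. c \<inter> E = T}"

lemma mem_fiber_iff:
  assumes "T \<subseteq> E" "d \<inter> E = {}"
  shows "d \<in> fiber C E T \<longleftrightarrow> d \<union> T \<in> C"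
proof
  assume "d \<in> fiber C E T"
  then obtain c where "c \<in> C" "c \<inter> E = T" "d = c - E"
    unfolding fiber_def by blast
  then have "c \<in> C" "d \<union> T = c" by blast+
  then show "d \<union> T \<in> C" by simp
next
  assume "d \<union> T \<in> C"
  moreover have "(d \<union> T) \<inter> E = T" "d = (d \<union> T) - E" using assms by blast+
  ultimately show "d \<in> fiber C E T"
    unfolding fiber_def by blast
qed

lemma fiber_subset_Pow: "C \<subseteq> Pow X \<Longrightarrow> fiber C E T \<subseteq> Pow (X - E)"
  unfolding fiber_def by blast

lemma fiber_Pow_Diff:
  assumes "T \<subseteq> E" "E \<subseteq> X"
  shows "fiber (Pow X - C) E T = Pow (X - E) - fiber C E T"
proof -
  have "d \<in> fiber (Pow X - C) E T \<longleftrightarrow> d \<in> Pow (X - E) - fiber C E T" if "d \<inter> E = {}" for d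
  proof -
    have "d \<union> T \<subseteq> X \<longleftrightarrow> d \<subseteq> X - E"
      using assms that by blast
    then show ?thesis
      using mem_fiber_iff[OF assms(1) that, of "Pow X - C"] mem_fiber_iff[OF assms(1) that, of C] by simp
  qed
  moreover have "d \<inter> E = {}" if "d \<in> fiber (Pow X - C) E T \<or> d \<in> Pow (X - E)" for d
    using that unfolding fiber_def by blast
  ultimately show ?thesis by (metis DiffD1 set_eqI)
qed

lemma fiber_fiber:
  assumes "x \<notin> F" "T \<subseteq> insert x F"
  shows "fiber (fiber C F (T - {x})) {x} (T \<inter> {x}) = fiber C (insert x F) T"
proof -
  have "d \<in> fiber (fiber C F (T - {x})) {x} (T \<inter> {x}) \<longleftrightarrow> d \<in> fiber C (insert x F) T"
    if "d \<inter> insert x F = {}" for d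
  proof -
    have "(d \<union> T \<inter> {x}) \<inter> F = {}" "T - {x} \<subseteq> F" "d \<inter> {x} = {}"
      using that assms by blast+
    then have "d \<in> fiber (fiber C F (T - {x})) {x} (T \<inter> {x}) \<longleftrightarrow> (d \<union> T \<inter> {x}) \<union> (T - {x}) \<in> C"
      by (simp add: mem_fiber_iff)
    also have "(d \<union> T \<inter> {x}) \<union> (T - {x}) = d \<union> T"
      by blast
    finally show ?thesis
      using that assms by (simp add: mem_fiber_iff)
  qed
  moreover have "d \<inter> insert x F = {}" if "d \<in> fiber (fiber C F (T - {x})) {x} (T \<inter> {x})" for d
    using that unfolding fiber_def by blast
  moreover have "d \<inter> insert x F = {}" if "d \<in> fiber C (insert x F) T" for d
    using that unfolding fiber_def by blast
  ultimately show ?thesis by (meson set_eqI)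
qed

lemma shatters_fiberD:
  assumes "shatters (fiber C E T) Y" "Y \<inter> E = {}" "S \<subseteq> Y"
  shows "\<exists>c\<in>C. c \<inter> E = T \<and> c \<inter> Y = S"
proof -
  obtain d where "d \<in> fiber C E T" "d \<inter> Y = S"
    using shattersD[OF assms(1,3)] by blast
  moreover obtain c where "c \<in> C" "c \<inter> E = T" "d = c - E"
    using calculation(1) unfolding fiber_def by blast
  ultimately show ?thesis
    using assms(2) by blast
qed

lemma shatters_of_fiber:
  assumes "shatters (fiber C E T) Y" "Y \<inter> E = {}"
  shows "shatters C Y"
proof (rule shattersI)
  fix S assume "S \<subseteq> Y"
  then show "\<exists>c\<in>C. c \<inter> Y = S"
    using shatters_fiberD[OF assms] by blast
qed

lemma shatters_insert_of_fibers:
  assumes "T \<subseteq> {x}" "x \<notin> Y" "shatters (fiber C {x} T) Y" "shatters (fiber C {x} ({x} - T)) Y"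
  shows "shatters C (insert x Y)"
proof (rule shattersI)
  fix S assume S: "S \<subseteq> insert x Y"
  have "S \<inter> {x} = T \<or> S \<inter> {x} = {x} - T"
    using assms(1) by blast
  then have "shatters (fiber C {x} (S \<inter> {x})) Y"
    using assms(3,4) by (elim disjE) simp_all
  then obtain c where "c \<in> C" "c \<inter> {x} = S \<inter> {x}" "c \<inter> Y = S - {x}"
    using shatters_fiberD[of C "{x}" "S \<inter> {x}" Y "S - {x}"] S assms(2) by blast
  then show "\<exists>c\<in>C. c \<inter> insert x Y = S"
    using S by blast
qed

lemma shatters_Pow_Diff_of_not_shatters:
  assumes "Y \<subseteq> X" "\<not> shatters D Y"
  shows "shatters (Pow X - D) (X - Y)"
proof -
  have "\<exists>S0. S0 \<subseteq> Y \<and> (\<forall>d\<in>D. d \<inter> Y \<noteq> S0)"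
  proof (rule ccontr)
    assume "\<nexists>S0. S0 \<subseteq> Y \<and> (\<forall>d\<in>D. d \<inter> Y \<noteq> S0)"
    then have "shatters D Y"
      by (intro shattersI) meson
    with assms(2) show False ..
  qed
  then obtain S0 where S0: "S0 \<subseteq> Y" "\<forall>d\<in>D. d \<inter> Y \<noteq> S0"
    by blast
  show ?thesis
  proof (rule shattersI)
    fix S assume S: "S \<subseteq> X - Y"
    then have "(S \<union> S0) \<inter> Y = S0"
      using S0(1) by blast
    then have "S \<union> S0 \<notin> D"
      using S0(2) by blast
    moreover have "S \<union> S0 \<subseteq> X" "(S \<union> S0) \<inter> (X - Y) = S"
      using S S0(1) assms(1) by blast+
    ultimately show "\<exists>c\<in>Pow X - D. c \<inter> (X - Y) = S"
      by blast
  qed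
qed

lemma co_shattered_of_fiber_singleton:
  assumes "C \<subseteq> Pow X" "x \<in> X" "T \<subseteq> {x}" "co_shattered (X - {x}) (fiber C {x} T) Y"
  shows "\<exists>Y'. co_shattered X C Y'"
proof -
  have fiber_compl: "fiber (Pow X - C) {x} T' = Pow (X - {x}) - fiber C {x} T'" if "T' \<subseteq> {x}" for T'
    using fiber_Pow_Diff[OF that] assms(2) by blast
  have Y: "Y \<subseteq> X - {x}" and shY: "shatters (fiber C {x} T) Y"
    and shZ: "shatters (fiber (Pow X - C) {x} T) (X - {x} - Y)"
    using assms(4) fiber_compl[OF assms(3)] unfolding co_shattered_def by auto
  have disj: "Y \<inter> {x} = {}" "(X - {x} - Y) \<inter> {x} = {}"
    using Y by blast+
  show ?thesis
  proof (cases "shatters (fiber C {x} ({x} - T)) Y")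
    case True
    then have "shatters C (insert x Y)"
      using shatters_insert_of_fibers[OF assms(3) _ shY] disj(1) by blast
    moreover have "shatters (Pow X - C) (X - insert x Y)"
    proof -
      have "X - {x} - Y = X - insert x Y"
        by blast
      then show ?thesis
        using shatters_of_fiber[OF shZ disj(2)] by metis
    qed
    ultimately have "co_shattered X C (insert x Y)"
      using Y assms(2) unfolding co_shattered_def by blast
    then show ?thesis ..
  next
    case False
    then have "shatters (fiber (Pow X - C) {x} ({x} - T)) (X - {x} - Y)"
      using shatters_Pow_Diff_of_not_shatters[OF Y] fiber_compl[of "{x} - T"] by simp
    then have "shatters (Pow X - C) (insert x (X - {x} - Y))"
      using shatters_insert_of_fibers[OF assms(3) _ shZ] by blast
    moreover have "insert x (X - {x} - Y) = X - Y"
      using Y assms(2) by blast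
    moreover have "shatters C Y"
      using shatters_of_fiber[OF shY disj(1)] .
    ultimately have "co_shattered X C Y"
      using Y unfolding co_shattered_def by auto
    then show ?thesis ..
  qed
qed

text \<open>Via Lawrence's characterisation, ampleness passes to fibers one coordinate at a time.\<close>

lemma ample_fiber:
  assumes "finite E" "E \<subseteq> X" "T \<subseteq> E" "C \<subseteq> Pow X" "ample X C"
  shows "ample (X - E) (fiber C E T)"
  using assms
proof (induction E arbitrary: T rule: finite_induct)
  case empty
  then show ?case by (simp add: fiber_def)
next
  case (insert x F)
  let ?C' = "fiber C F (T - {x})"
  have C': "?C' \<subseteq> Pow (X - F)" "ample (X - F) ?C'"
    using fiber_subset_Pow[OF insert.prems(3)] insert.IH[of "T - {x}"] insert.prems by auto
  have "x \<in> X - F" "T \<inter> {x} \<subseteq> {x}"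
    using insert by auto
  then have "\<nexists>Y. co_shattered (X - F - {x}) (fiber ?C' {x} (T \<inter> {x})) Y"
    using co_shattered_of_fiber_singleton[OF C'(1)] C'(2) ample_iff_not_co_shattered[OF C'(1)] by blast
  then have "ample (X - F - {x}) (fiber ?C' {x} (T \<inter> {x}))"
    using ample_iff_not_co_shattered[OF fiber_subset_Pow[OF C'(1)]] by blast
  moreover have "X - F - {x} = X - insert x F"
    by blast
  ultimately show ?case
    using fiber_fiber[OF insert(2,5)] by simp
qed

lemma card_sym_diff_eq_1_if_ample_pair:
  assumes "ample X {a, b}" "a \<noteq> b" "sym_diff a b \<subseteq> X"
  shows "card (sym_diff a b) = 1"
proof -
  obtain x where x: "x \<in> sym_diff a b"
    using assms(2) by blast
  then have "a \<inter> {x} \<noteq> b \<inter> {x}"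
    by blast
  then have "shatters {a, b} {x}"
    by (intro shattersI) (metis Int_lower2 subset_singletonD insertCI)
  moreover have "{x} \<subseteq> X"
    using x assms(3) by blast
  ultimately obtain T where T: "T \<subseteq> X - {x}" "cube T {x} \<subseteq> {a, b}"
    using ampleD[OF assms(1)] by meson
  have "T \<in> {a, b}" "insert x T \<in> {a, b}"
    using T(2) mem_cubeI[of "{}" "{x}" T] mem_cubeI[of "{x}" "{x}" T] by auto
  moreover have "T \<noteq> insert x T"
    using T(1) by blast
  ultimately have "sym_diff a b = {x}"
    by blast
  then show ?thesis
    by simp
qed

text \<open>The fiber over the face spanned by \<open>p\<close> and \<open>q\<close> would be an ample class consisting of
  two antipodal points.\<close>

lemma ample_interval:
  assumes "finite X" "C \<subseteq> Pow X" "ample X C" "p \<in> C" "q \<in> C" "2 \<le> card (sym_diff p q)"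
  shows "\<exists>c\<in>C. c \<noteq> p \<and> c \<noteq> q \<and> sym_diff c p \<subseteq> sym_diff p q"
proof (rule ccontr)
  assume none: "\<not> ?thesis"
  define D where "D = sym_diff p q"
  let ?F = "fiber C (X - D) (p - D)"
  have pq: "p \<subseteq> X" "q \<subseteq> X" "q - D = p - D"
    using assms(2,4,5) unfolding D_def by blast+
  then have "D \<subseteq> X" "p - D \<subseteq> X - D" "X - (X - D) = D"
    unfolding D_def by blast+
  then have ampleF: "ample D ?F"
    using ample_fiber[of "X - D" X "p - D" C] assms(1-3) by auto
  have in_F: "d \<in> ?F" if "d \<subseteq> D" "d \<union> (p - D) \<in> C" for d
  proof -
    have "d \<inter> (X - D) = {}"
      using that(1) by blast
    then show ?thesis
      using mem_fiber_iff[OF \<open>p - D \<subseteq> X - D\<close>] that(2) by blast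
  qed
  have "(p \<inter> D) \<union> (p - D) = p" "(q \<inter> D) \<union> (p - D) = q"
    using pq(3) by blast+
  then have pF: "p \<inter> D \<in> ?F" and qF: "q \<inter> D \<in> ?F"
    using in_F[of "p \<inter> D"] in_F[of "q \<inter> D"] assms(4,5) by simp_all
  have F_cases: "d = p \<inter> D \<or> d = q \<inter> D" if "d \<in> ?F" for d
  proof -
    have "d \<subseteq> D" "d \<inter> (X - D) = {}"
      using that fiber_subset_Pow[OF assms(2)] \<open>X - (X - D) = D\<close> by blast+
    then have "d \<union> (p - D) \<in> C"
      using that mem_fiber_iff[of "p - D" "X - D" d C] \<open>p - D \<subseteq> X - D\<close> by blast
    moreover have "sym_diff (d \<union> (p - D)) p \<subseteq> D"
      using \<open>d \<subseteq> D\<close> by blast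
    ultimately have "d \<union> (p - D) = p \<or> d \<union> (p - D) = q"
      using none unfolding D_def by meson
    then show ?thesis
      using \<open>d \<subseteq> D\<close> by blast
  qed
  have "?F = {p \<inter> D, q \<inter> D}"
    using pF qF F_cases by blast
  moreover have "sym_diff (p \<inter> D) (q \<inter> D) = D"
    unfolding D_def by blast
  moreover have "D \<noteq> {}"
    using assms(6) unfolding D_def by (intro notI) simp
  ultimately have "card D = 1"
    using card_sym_diff_eq_1_if_ample_pair[of D "p \<inter> D" "q \<inter> D"] ampleF by force
  then show False
    using assms(6) unfolding D_def by simp
qed

lemma ample_neighbor_toward:
  assumes "finite X" "B \<subseteq> Pow X" "ample X B" "v \<in> B" "u \<in> B" "u \<noteq> v"
  shows "\<exists>w\<in>B. \<exists>x. sym_diff v w = {x} \<and> x \<in> sym_diff v u"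
  using assms(5,6)
proof (induction "card (sym_diff v u)" arbitrary: u rule: less_induct)
  case less
  have "finite (sym_diff v u)" "sym_diff v u \<noteq> {}"
    using assms(1,2,4) less.prems finite_subset[of "sym_diff v u" X] by blast+
  then have "card (sym_diff v u) \<noteq> 0"
    by simp
  show ?case
  proof (cases "card (sym_diff v u) = 1")
    case True
    then obtain x where "sym_diff v u = {x}"
      by (rule card_1_singletonE)
    then show ?thesis
      using less.prems(1) by blast
  next
    case False
    then obtain c where c: "c \<in> B" "c \<noteq> v" "c \<noteq> u" "sym_diff c v \<subseteq> sym_diff v u"
      using ample_interval[OF assms(1-4) less.prems(1)] \<open>card (sym_diff v u) \<noteq> 0\<close> by auto
    then have "sym_diff v c \<subset> sym_diff v u"
      by blast
    then have "card (sym_diff v c) < card (sym_diff v u)"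
      using \<open>finite (sym_diff v u)\<close> by (simp add: psubset_card_mono)
    then obtain w x where "w \<in> B" "sym_diff v w = {x}" "x \<in> sym_diff v c"
      using less.hyps c(1,2) by blast
    then show ?thesis
      using \<open>sym_diff v c \<subset> sym_diff v u\<close> by blast
  qed
qed

lemma sym_diff_eq_singleton_iff: "sym_diff v w = {x} \<longleftrightarrow> w = sym_diff v {x}"
  by blast

definition shelling_step :: "'a set set \<Rightarrow> 'a set \<Rightarrow> bool" where
  "shelling_step A v \<longleftrightarrow> (\<forall>u\<in>A. \<exists>w\<in>A. \<exists>x. sym_diff v w = {x} \<and> x \<in> sym_diff v u)"

lemma shelling_step_of_ample:
  assumes "finite X" "B \<subseteq> Pow X" "ample X B" "v \<in> B"
  shows "shelling_step (B - {v}) v"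
  unfolding shelling_step_def
proof
  fix u assume "u \<in> B - {v}"
  then obtain w x where "w \<in> B" "sym_diff v w = {x}" "x \<in> sym_diff v u"
    using ample_neighbor_toward[OF assms] by blast
  moreover have "w \<noteq> v"
    using calculation(2) by blast
  ultimately show "\<exists>w\<in>B - {v}. \<exists>x. sym_diff v w = {x} \<and> x \<in> sym_diff v u"
    by blast
qed

lemma shelling_step_flip_mem:
  assumes "ample X A" "shelling_step A v" "Y \<subseteq> X" "y \<in> Y"
    and missing: "\<And>a. a \<in> A \<Longrightarrow> a \<inter> Y \<noteq> v \<inter> Y"
    and others: "\<And>S. S \<subseteq> Y \<Longrightarrow> S \<noteq> v \<inter> Y \<Longrightarrow> \<exists>a\<in>A. a \<inter> Y = S"
  shows "sym_diff v {y} \<in> A"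
proof -
  have "shatters A (Y - {y})"
  proof (rule shattersI)
    fix R assume R: "R \<subseteq> Y - {y}"
    define S where "S = (if R = v \<inter> Y then insert y R else R)"
    have "S \<subseteq> Y" "S \<noteq> v \<inter> Y"
      using R assms(4) unfolding S_def by auto
    then obtain a where "a \<in> A" "a \<inter> Y = S"
      using others by blast
    moreover have "S \<inter> (Y - {y}) = R"
      using R unfolding S_def by auto
    ultimately show "\<exists>a\<in>A. a \<inter> (Y - {y}) = R"
      by blast
  qed
  moreover have "Y - {y} \<subseteq> X"
    using assms(3) by blast
  ultimately obtain T where T: "T \<subseteq> X - (Y - {y})" "cube T (Y - {y}) \<subseteq> A"
    using ampleD[OF assms(1)] by meson
  define u where "u = T \<union> (v \<inter> Y - {y})"
  have "u \<in> A"
    using T(2) mem_cubeI[of "v \<inter> Y - {y}" "Y - {y}" T] unfolding u_def by blast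
  then obtain w x where w: "w \<in> A" "w = sym_diff v {x}" "x \<in> sym_diff v u"
    using assms(2) unfolding shelling_step_def sym_diff_eq_singleton_iff by blast
  have "x \<in> Y"
  proof (rule ccontr)
    assume "x \<notin> Y"
    then have "w \<inter> Y = v \<inter> Y"
      unfolding w(2) by blast
    then show False
      using missing w(1) by blast
  qed
  moreover have "u \<inter> (Y - {y}) = v \<inter> (Y - {y})"
    using T(1) unfolding u_def by blast
  ultimately have "x = y"
    using w(3) by blast
  then show ?thesis
    using w(1,2) by simp
qed

text \<open>A co-shattered \<open>Y\<close> could only be caused by \<open>v\<close>: then \<open>A\<close> misses exactly the trace of \<open>v\<close>
  on \<open>Y\<close>, which forces all neighbours of \<open>v\<close> across \<open>Y\<close> into \<open>A\<close>, while the ample class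
  \<open>Pow X - A\<close> contains a neighbour of \<open>v\<close> across \<open>Y\<close>.\<close>

lemma ample_insert_shelling_step:
  assumes "finite X" "A \<subseteq> Pow X" "ample X A" "v \<in> Pow X - A" "shelling_step A v"
  shows "ample X (insert v A)"
proof -
  have "\<not> co_shattered X (insert v A) Y" for Y
  proof
    assume "co_shattered X (insert v A) Y"
    then have Y: "Y \<subseteq> X" and shY: "shatters (insert v A) Y"
      and shZ: "shatters (Pow X - insert v A) (X - Y)"
      unfolding co_shattered_def by blast+
    have "shatters (Pow X - A) (X - Y)"
      using shatters_mono[OF shZ] by blast
    then have "\<not> shatters A Y"
      using assms(2,3) Y ample_iff_not_co_shattered unfolding co_shattered_def by blast
    have others: "\<exists>a\<in>A. a \<inter> Y = S" if "S \<subseteq> Y" "S \<noteq> v \<inter> Y" for S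
      using shattersD[OF shY that(1)] that(2) by blast
    have missing: "a \<inter> Y \<noteq> v \<inter> Y" if "a \<in> A" for a
    proof
      assume "a \<inter> Y = v \<inter> Y"
      then have "shatters A Y"
        using others that by (intro shattersI) metis
      with \<open>\<not> shatters A Y\<close> show False ..
    qed
    obtain c where c: "c \<in> Pow X - insert v A" "c \<inter> (X - Y) = v \<inter> (X - Y)"
      using shattersD[OF shZ, of "v \<inter> (X - Y)"] by blast
    then have c': "c \<in> Pow X - A" "c \<noteq> v" "sym_diff v c \<subseteq> Y"
      using assms(4) by blast+
    obtain w y where w: "w \<in> Pow X - A" "w = sym_diff v {y}" "y \<in> sym_diff v c"
      using ample_neighbor_toward[OF assms(1) Diff_subset ample_Diff[OF assms(2,3)] assms(4) c'(1,2)]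
      unfolding sym_diff_eq_singleton_iff by blast
    moreover have "sym_diff v {y} \<in> A"
      using shelling_step_flip_mem[OF assms(3,5) Y _ missing others] w(3) \<open>sym_diff v c \<subseteq> Y\<close> by blast
    ultimately show False
      using w(1) by blast
  qed
  moreover have "insert v A \<subseteq> Pow X"
    using assms(2,4) by blast
  ultimately show ?thesis
    using ample_iff_not_co_shattered by blast
qed

definition shelling_order :: "'a set list \<Rightarrow> bool" where
  "shelling_order bs \<longleftrightarrow> distinct bs \<and> (\<forall>j<length bs. shelling_step (set (take j bs)) (bs ! j))"

lemma set_take_Suc_distinct:
  assumes "distinct bs" "j < length bs"
  shows "set (take (Suc j) bs) = insert (bs ! j) (set (take j bs))" "bs ! j \<notin> set (take j bs)"
  using assms distinct_take[OF assms(1), of "Suc j"] by (simp_all add: take_Suc_conv_app_nth)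

lemma shelling_order_iff_ample_prefixes:
  assumes "finite X" "set bs \<subseteq> Pow X"
  shows "shelling_order bs \<longleftrightarrow> distinct bs \<and> (\<forall>i\<le>length bs. ample X (set (take i bs)))"
proof
  assume sh: "shelling_order bs"
  have "ample X (set (take i bs))" if "i \<le> length bs" for i
    using that
  proof (induction i)
    case 0
    then show ?case by (simp add: ample_empty)
  next
    case (Suc j)
    then have j: "j < length bs" by simp
    have "set (take j bs) \<subseteq> Pow X" "bs ! j \<in> Pow X"
      using assms(2) set_take_subset[of j bs] nth_mem[OF j] by blast+
    moreover have "distinct bs" "shelling_step (set (take j bs)) (bs ! j)"
      using sh j unfolding shelling_order_def by blast+
    ultimately show ?case
      using ample_insert_shelling_step[OF assms(1)] Suc set_take_Suc_distinct[of bs j] j by simp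
  qed
  then show "distinct bs \<and> (\<forall>i\<le>length bs. ample X (set (take i bs)))"
    using sh unfolding shelling_order_def by blast
next
  assume ample_prefixes: "distinct bs \<and> (\<forall>i\<le>length bs. ample X (set (take i bs)))"
  have "shelling_step (set (take j bs)) (bs ! j)" if j: "j < length bs" for j
  proof -
    let ?B = "set (take (Suc j) bs)"
    have "?B \<subseteq> Pow X" "ample X ?B"
      using assms(2) set_take_subset[of "Suc j" bs] ample_prefixes j by auto
    moreover have "bs ! j \<in> ?B" "?B - {bs ! j} = set (take j bs)"
      using set_take_Suc_distinct[of bs j] ample_prefixes j by auto
    ultimately show ?thesis
      using shelling_step_of_ample[OF assms(1)] by metis
  qed
  then show "shelling_order bs"
    using ample_prefixes unfolding shelling_order_def by blast
qed

text \<open>Beyond \<open>as\<close>, every level set is the complement of a level set of \<open>cs\<close>.\<close>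

lemma ample_prefixes_append_rev:
  assumes "distinct cs" "set as \<inter> set cs = {}" "set as \<union> set cs = Pow X"
    and "\<forall>i\<le>length as. ample X (set (take i as))" "\<forall>i\<le>length cs. ample X (set (take i cs))"
  shows "\<forall>i\<le>length (as @ rev cs). ample X (set (take i (as @ rev cs)))"
proof (intro allI impI)
  fix i assume i: "i \<le> length (as @ rev cs)"
  show "ample X (set (take i (as @ rev cs)))"
  proof (cases "i \<le> length as")
    case True
    then show ?thesis
      using assms(4) by simp
  next
    case False
    define k where "k = length cs - (i - length as)"
    have k: "k \<le> length cs" "take i (as @ rev cs) = as @ rev (drop k cs)"
      using False unfolding k_def by (simp_all add: take_rev)
    have "set (take k cs) \<inter> set (drop k cs) = {}" "set (take k cs) \<union> set (drop k cs) = set cs"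
      using set_take_disj_set_drop_if_distinct[OF assms(1), of k k] set_append[of "take k cs" "drop k cs"]
      by simp_all
    then have "set (take i (as @ rev cs)) = Pow X - set (take k cs)"
      using k(2) assms(2,3) by auto
    moreover have "set (take k cs) \<subseteq> Pow X"
      using assms(3) set_take_subset[of k cs] by blast
    ultimately show ?thesis
      using ample_Diff assms(5) k(1) by metis
  qed
qed

lemma shelling_order_extends:
  assumes "finite X" "set as \<subseteq> Pow X" "shelling_order as" "dismantlable X (Pow X - set as)"
  shows "\<exists>cs. shelling_order (as @ cs) \<and> set (as @ cs) = Pow X"
proof -
  obtain cs where cs: "distinct cs" "set cs = Pow X - set as"
    and levels: "\<forall>i. 1 \<le> i \<and> i \<le> length cs \<longrightarrow> ample X (set (take i cs))"
    using assms(4) unfolding dismantlable_def by blast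
  have "\<forall>i\<le>length cs. ample X (set (take i cs))"
    using levels ample_empty by (metis One_nat_def Suc_leI neq0_conv empty_set take_0)
  moreover have "distinct as" "\<forall>i\<le>length as. ample X (set (take i as))"
    using assms(3) shelling_order_iff_ample_prefixes[OF assms(1,2)] by blast+
  moreover have "set as \<inter> set cs = {}" "set as \<union> set cs = Pow X"
    using cs(2) assms(2) by blast+
  ultimately have "distinct (as @ rev cs)" "set (as @ rev cs) = Pow X"
    and "\<forall>i\<le>length (as @ rev cs). ample X (set (take i (as @ rev cs)))"
    using ample_prefixes_append_rev[OF cs(1)] cs(1) by auto
  then have "shelling_order (as @ rev cs)"
    using shelling_order_iff_ample_prefixes[OF assms(1), of "as @ rev cs"] by simp
  then show ?thesis
    using \<open>set (as @ rev cs) = Pow X\<close> by blast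
qed

lemma pure_of_size_Pow_Int_UN_iff:
  assumes "finite s"
  shows "pure_of_size (Pow s \<inter> (\<Union>i\<in>I. Pow (t i))) k \<longleftrightarrow>
    (\<forall>i\<in>I. \<exists>j\<in>I. s \<inter> t i \<subseteq> s \<inter> t j \<and> card (s \<inter> t j) = k)"
    (is "pure_of_size ?F k \<longleftrightarrow> _")
proof
  assume pure: "pure_of_size ?F k"
  show "\<forall>i\<in>I. \<exists>j\<in>I. s \<inter> t i \<subseteq> s \<inter> t j \<and> card (s \<inter> t j) = k"
  proof
    fix i assume i: "i \<in> I"
    have "finite ?F"
      using assms by simp
    moreover have "s \<inter> t i \<in> ?F"
      using i by blast
    ultimately obtain m where m: "m \<in> ?F" "s \<inter> t i \<subseteq> m" "\<forall>b\<in>?F. m \<subseteq> b \<longrightarrow> m = b"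
      using finite_has_maximal2 by (metis (no_types, lifting))
    then obtain j where j: "j \<in> I" "m \<subseteq> s \<inter> t j"
      by blast
    have "s \<inter> t j \<in> ?F"
      using j(1) by blast
    then have "m = s \<inter> t j"
      using m(3) j(2) by blast
    moreover have "m \<in> maximal_sets ?F"
      unfolding maximal_sets_def using m(1,3) by blast
    ultimately show "\<exists>j\<in>I. s \<inter> t i \<subseteq> s \<inter> t j \<and> card (s \<inter> t j) = k"
      using pure j(1) m(2) unfolding pure_of_size_def by blast
  qed
next
  assume above: "\<forall>i\<in>I. \<exists>j\<in>I. s \<inter> t i \<subseteq> s \<inter> t j \<and> card (s \<inter> t j) = k"
  show "pure_of_size ?F k"
    unfolding pure_of_size_def
  proof
    fix m assume "m \<in> maximal_sets ?F"
    then have m: "m \<in> ?F" "\<forall>b\<in>?F. m \<subseteq> b \<longrightarrow> m = b"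
      unfolding maximal_sets_def by blast+
    then obtain i where "i \<in> I" "m \<subseteq> s \<inter> t i"
      by blast
    then obtain j where j: "j \<in> I" "m \<subseteq> s \<inter> t j" "card (s \<inter> t j) = k"
      using above by blast
    then have "m = s \<inter> t j"
      using m(2) by blast
    then show "finite m \<and> card m = k"
      using j(3) assms by simp
  qed
qed

definition cross_facet :: "nat \<Rightarrow> nat set \<Rightarrow> (nat \<times> bool) set" where
  "cross_facet n a = (\<lambda>i. (i, i \<in> a)) ` {0..<n}"

definition positive_part :: "(nat \<times> bool) set \<Rightarrow> nat set" where
  "positive_part \<sigma> = {i. (i, True) \<in> \<sigma>}"

lemma cross_facet_in_cross_facets: "cross_facet n a \<in> cross_facets n"
  unfolding cross_facet_def cross_facets_def by auto

lemma positive_part_subset: "\<sigma> \<in> cross_facets n \<Longrightarrow> positive_part \<sigma> \<subseteq> {0..<n}"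
  unfolding cross_facets_def positive_part_def by auto

lemma positive_part_cross_facet: "a \<subseteq> {0..<n} \<Longrightarrow> positive_part (cross_facet n a) = a"
  unfolding cross_facet_def positive_part_def by auto

lemma cross_facet_positive_part:
  assumes "\<sigma> \<in> cross_facets n"
  shows "cross_facet n (positive_part \<sigma>) = \<sigma>"
proof -
  have \<sigma>: "\<sigma> \<subseteq> {0..<n} \<times> UNIV" "\<forall>i<n. ((i, True) \<in> \<sigma>) \<noteq> ((i, False) \<in> \<sigma>)"
    using assms unfolding cross_facets_def by auto
  have "p \<in> (\<lambda>i. (i, i \<in> positive_part \<sigma>)) ` {0..<n}" if "p \<in> \<sigma>" for p
  proof -
    obtain i b where p: "p = (i, b)"
      by (cases p)
    then have "i < n"
      using \<sigma>(1) that by auto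
    moreover have "b = (i \<in> positive_part \<sigma>)"
      using \<sigma>(2) that p \<open>i < n\<close> unfolding positive_part_def by (cases b) auto
    ultimately show ?thesis
      using p by auto
  qed
  moreover have "(\<lambda>i. (i, i \<in> positive_part \<sigma>)) ` {0..<n} \<subseteq> \<sigma>"
    using \<sigma>(2) unfolding positive_part_def by auto
  ultimately show ?thesis
    unfolding cross_facet_def by blast
qed

lemma cross_facets_eq_image: "cross_facets n = cross_facet n ` Pow {0..<n}"
proof
  show "cross_facets n \<subseteq> cross_facet n ` Pow {0..<n}"
    using cross_facet_positive_part positive_part_subset by (metis PowI image_eqI subsetI)
  show "cross_facet n ` Pow {0..<n} \<subseteq> cross_facets n"
    using cross_facet_in_cross_facets by blast
qed

lemma inj_on_cross_facet: "inj_on (cross_facet n) (Pow {0..<n})"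
  by (rule inj_on_inverseI[of _ positive_part]) (simp add: positive_part_cross_facet)

lemma cross_facet_Int:
  assumes "a \<subseteq> {0..<n}" "b \<subseteq> {0..<n}"
  shows "cross_facet n a \<inter> cross_facet n b = (\<lambda>i. (i, i \<in> a)) ` ({0..<n} - sym_diff a b)"
  unfolding cross_facet_def by auto

lemma card_cross_facet_Int:
  assumes "a \<subseteq> {0..<n}" "b \<subseteq> {0..<n}"
  shows "card (cross_facet n a \<inter> cross_facet n b) = n - card (sym_diff a b)"
proof -
  have "inj_on (\<lambda>i. (i, i \<in> a)) ({0..<n} - sym_diff a b)"
    by (rule inj_onI) simp
  then have "card (cross_facet n a \<inter> cross_facet n b) = card ({0..<n} - sym_diff a b)"
    unfolding cross_facet_Int[OF assms] by (rule card_image)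
  also have "\<dots> = n - card (sym_diff a b)"
    using assms by (subst card_Diff_subset) (auto intro: finite_subset)
  finally show ?thesis .
qed

lemma cross_facet_Int_subset_iff:
  assumes "a \<subseteq> {0..<n}" "b \<subseteq> {0..<n}" "c \<subseteq> {0..<n}"
  shows "cross_facet n a \<inter> cross_facet n c \<subseteq> cross_facet n a \<inter> cross_facet n b \<longleftrightarrow> sym_diff a b \<subseteq> sym_diff a c"
proof -
  have "inj (\<lambda>i. (i, i \<in> a))"
    by (rule injI) simp
  then have "cross_facet n a \<inter> cross_facet n c \<subseteq> cross_facet n a \<inter> cross_facet n b
      \<longleftrightarrow> {0..<n} - sym_diff a c \<subseteq> {0..<n} - sym_diff a b"
    unfolding cross_facet_Int[OF assms(1,2)] cross_facet_Int[OF assms(1,3)]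
    by (rule inj_image_subset_iff)
  also have "\<dots> \<longleftrightarrow> sym_diff a b \<subseteq> sym_diff a c"
    using assms by blast
  finally show ?thesis .
qed

lemma cross_facet_ridge_toward_iff:
  assumes "a \<subseteq> {0..<n}" "b \<subseteq> {0..<n}" "c \<subseteq> {0..<n}" "a \<noteq> b"
  shows "(cross_facet n a \<inter> cross_facet n c \<subseteq> cross_facet n a \<inter> cross_facet n b
          \<and> card (cross_facet n a \<inter> cross_facet n b) = n - 1)
     \<longleftrightarrow> (\<exists>x. sym_diff a b = {x} \<and> x \<in> sym_diff a c)"
proof -
  have "sym_diff a b \<subseteq> {0..<n}" "sym_diff a b \<noteq> {}"
    using assms by blast+
  then have "card (sym_diff a b) \<le> n" "card (sym_diff a b) \<noteq> 0"
    using card_mono[of "{0..<n}" "sym_diff a b"] finite_subset[of "sym_diff a b" "{0..<n}"] by auto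
  then have "card (cross_facet n a \<inter> cross_facet n b) = n - 1 \<longleftrightarrow> card (sym_diff a b) = 1"
    unfolding card_cross_facet_Int[OF assms(1,2)] by linarith
  also have "\<dots> \<longleftrightarrow> (\<exists>x. sym_diff a b = {x})"
    using card_1_singleton_iff by (simp only: One_nat_def)
  finally have card_iff: "card (cross_facet n a \<inter> cross_facet n b) = n - 1 \<longleftrightarrow> (\<exists>x. sym_diff a b = {x})" .
  have "D \<subseteq> E \<and> (\<exists>x. D = {x}) \<longleftrightarrow> (\<exists>x. D = {x} \<and> x \<in> E)" for D E :: "nat set"
    by blast
  then show ?thesis
    unfolding cross_facet_Int_subset_iff[OF assms(1-3)] card_iff .
qed

lemma pure_link_iff_shelling_step:
  assumes "distinct bs" "set bs \<subseteq> Pow {0..<n}" "j < length bs"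
  shows "pure_of_size (Pow (map (cross_facet n) bs ! j) \<inter> (\<Union>i<j. Pow (map (cross_facet n) bs ! i))) (n - 1)
     \<longleftrightarrow> shelling_step (set (take j bs)) (bs ! j)"
proof -
  let ?F = "\<lambda>i. cross_facet n (bs ! i)"
  have facet: "bs ! i \<subseteq> {0..<n}" if "i < length bs" for i
    using assms(2) nth_mem[OF that] by blast
  have "(\<Union>i<j. Pow (map (cross_facet n) bs ! i)) = (\<Union>i\<in>{..<j}. Pow (?F i))"
    using assms(3) by simp
  moreover have "finite (?F j)"
    unfolding cross_facet_def by simp
  ultimately have "pure_of_size (Pow (map (cross_facet n) bs ! j) \<inter> (\<Union>i<j. Pow (map (cross_facet n) bs ! i))) (n - 1)
      \<longleftrightarrow> (\<forall>i\<in>{..<j}. \<exists>k\<in>{..<j}. ?F j \<inter> ?F i \<subseteq> ?F j \<inter> ?F k \<and> card (?F j \<inter> ?F k) = n - 1)"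
    using pure_of_size_Pow_Int_UN_iff assms(3) by simp
  also have "\<dots> \<longleftrightarrow> (\<forall>i\<in>{..<j}. \<exists>k\<in>{..<j}. \<exists>x. sym_diff (bs ! j) (bs ! k) = {x} \<and> x \<in> sym_diff (bs ! j) (bs ! i))"
  proof -
    have "bs ! j \<noteq> bs ! k" if "k < j" for k
      using assms(1,3) that nth_eq_iff_index_eq by fastforce
    then have "(?F j \<inter> ?F i \<subseteq> ?F j \<inter> ?F k \<and> card (?F j \<inter> ?F k) = n - 1)
        \<longleftrightarrow> (\<exists>x. sym_diff (bs ! j) (bs ! k) = {x} \<and> x \<in> sym_diff (bs ! j) (bs ! i))"
      if "i < j" "k < j" for i k
      using cross_facet_ridge_toward_iff facet assms(3) that by simp
    then show ?thesis
      by (meson lessThan_iff)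
  qed
  also have "\<dots> \<longleftrightarrow> shelling_step (set (take j bs)) (bs ! j)"
  proof -
    have "set (take j bs) = (!) bs ` {..<j}"
      using nth_image[of j bs] assms(3) by (simp add: atLeast0LessThan)
    moreover have "(\<forall>u\<in>(!) bs ` {..<j}. \<exists>w\<in>(!) bs ` {..<j}. P u w) \<longleftrightarrow> (\<forall>i\<in>{..<j}. \<exists>k\<in>{..<j}. P (bs ! i) (bs ! k))"
      for P :: "nat set \<Rightarrow> nat set \<Rightarrow> bool"
      by blast
    ultimately show ?thesis
      unfolding shelling_step_def by presburger
  qed
  finally show ?thesis .
qed

lemma partial_shelling_cross_facet_iff:
  assumes "set bs \<subseteq> Pow {0..<n}"
  shows "partial_shelling n (map (cross_facet n) bs) \<longleftrightarrow> shelling_order bs"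
proof -
  have "distinct (map (cross_facet n) bs) \<longleftrightarrow> distinct bs"
    using distinct_map inj_on_subset[OF inj_on_cross_facet assms] by blast
  moreover have "set (map (cross_facet n) bs) \<subseteq> cross_facets n"
    using cross_facet_in_cross_facets by auto
  moreover have "shelling_step (set (take 0 bs)) (bs ! 0)"
    unfolding shelling_step_def by simp
  ultimately show ?thesis
    unfolding partial_shelling_def shelling_order_def
    using pure_link_iff_shelling_step[OF _ assms] by (metis length_map less_one linorder_not_less)
qed

theorem corollary4p4:
  assumes "\<forall>(X::nat set) C. finite X \<and> C \<subseteq> Pow X \<and> ample X C \<longrightarrow> dismantlable X C"
  shows "\<forall>n. extendably_shellable n"
  unfolding extendably_shellable_def
proof (intro allI impI)
  fix n \<sigma>s
  assume "partial_shelling n \<sigma>s"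
  let ?X = "{0..<n}"
  define as where "as = map positive_part \<sigma>s"
  have facets: "set \<sigma>s \<subseteq> cross_facets n"
    using \<open>partial_shelling n \<sigma>s\<close> unfolding partial_shelling_def by blast
  have \<sigma>s: "\<sigma>s = map (cross_facet n) as"
    unfolding as_def map_map using facets cross_facet_positive_part by (intro map_idI[symmetric]) auto
  have as: "set as \<subseteq> Pow ?X"
    unfolding as_def using facets positive_part_subset by auto
  have "shelling_order as"
    using partial_shelling_cross_facet_iff[OF as] \<open>partial_shelling n \<sigma>s\<close> \<sigma>s by simp
  then have "ample ?X (set as)"
    using shelling_order_iff_ample_prefixes[OF _ as] by (metis finite_atLeastLessThan order_refl take_all)
  then have "dismantlable ?X (Pow ?X - set as)"
    using ample_Diff[OF as] by (intro assms[rule_format] conjI) auto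
  then obtain cs where cs: "shelling_order (as @ cs)" "set (as @ cs) = Pow ?X"
    using shelling_order_extends[OF _ as \<open>shelling_order as\<close>] by blast
  then have "partial_shelling n (map (cross_facet n) (as @ cs))"
    using partial_shelling_cross_facet_iff[of "as @ cs" n] by simp
  moreover have "set (map (cross_facet n) (as @ cs)) = cross_facets n"
    unfolding cross_facets_eq_image set_map cs(2) ..
  ultimately have "shelling n (\<sigma>s @ map (cross_facet n) cs)"
    unfolding shelling_def \<sigma>s by simp
  then show "\<exists>\<tau>s. shelling n (\<sigma>s @ \<tau>s)" ..
qed

end
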